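(* For $i=1,2$ let $R_i$ be a unital ring whose additive group is torsion-free of rank $n$, and let $M_i\subseteq R_i^\times$ be a submonoid. Let $\mathcal L$ be a subgroup of $R_1$ of rank $n$, and assume that ${\rm span}_{\mathbb Z}(M_1)$ has finite index in $R_1$. If there are an injective additive group homomorphism $\mathfrak b\colon\mathbb Q\mathcal L\to\mathbb QR_2$ and a group homomorphism $\mathfrak t\colon\langle M_1\rangle\to\langle M_2\rangle$ such that $\mathfrak b(ax)=\mathfrak t(a)\mathfrak b(x)$ for all $a\in M_1$ and $x\in\mathbb Q\mathcal L$, then there is a unital $\mathbb Q$-algebra isomorphism $\varphi\colon\mathbb QR_1\to\mathbb QR_2$ with $\varphi|_{\langle M_1\rangle}=\mathfrak t$.
   Context: The rank of $R$ is $\dim_{\mathbb Q}\mathbb Q\otimes_{\mathbb Z}R$; $\mathbb QR=\mathbb Q\otimes_{\mathbb Z}R$ (an $n$-dimensional $\mathbb Q$-algebra containing $R$), and for a subgroup $\mathcal L\subseteq R$, $\mathbb Q\mathcal L=\mathbb Q\otimes\mathcal L\subseteq\mathbb QR$. $R^\times$ is the monoid of left regular elements of $R$ (those $a$ with $x\mapsto ax$ injective on $R$); these are invertible in $\mathbb QR$, and $\langle M\rangle$ denotes the subgroup of the unit group $(\mathbb QR)^*$ generated by $M$. *)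

theory Defs
  imports Complex_Main
begin

definition qalgebra :: "(rat \<Rightarrow> 'a::ring_1 \<Rightarrow> 'a) \<Rightarrow> bool" where
  "qalgebra s \<longleftrightarrow> Vector_Spaces.vector_space s \<and>
     (\<forall>c x y. s c (x * y) = s c x * y \<and> s c (x * y) = x * s c y)"

abbreviation qspan :: "(rat \<Rightarrow> 'a::ring_1 \<Rightarrow> 'a) \<Rightarrow> 'a set \<Rightarrow> 'a set" where
  "qspan s X \<equiv> module.span s X"

text \<open>rank of X := dim_Q (Q X) = dimension of its Q-span (finite, equal to n).\<close>
definition has_rank :: "(rat \<Rightarrow> 'a::ring_1 \<Rightarrow> 'a) \<Rightarrow> 'a set \<Rightarrow> nat \<Rightarrow> bool" where
  "has_rank s X n \<longleftrightarrow> (\<exists>B. B \<subseteq> qspan s X \<and> finite B \<and> \<not> module.dependent s B \<and>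
      qspan s B = qspan s X \<and> card B = n)"

definition add_subgroup :: "'a::ring_1 set \<Rightarrow> bool" where
  "add_subgroup L \<longleftrightarrow> 0 \<in> L \<and> (\<forall>x\<in>L. \<forall>y\<in>L. x + y \<in> L \<and> - x \<in> L)"

definition unital_subring :: "'a::ring_1 set \<Rightarrow> bool" where
  "unital_subring R \<longleftrightarrow> add_subgroup R \<and> 1 \<in> R \<and> (\<forall>x\<in>R. \<forall>y\<in>R. x * y \<in> R)"

text \<open>R is a ring whose additive group is torsion-free of finite rank n, realised
inside the Q-algebra QR = Q \<otimes> R, which is the ambient type (QR = Q-span of R).\<close>
definition tf_ring_in :: "(rat \<Rightarrow> 'a::ring_1 \<Rightarrow> 'a) \<Rightarrow> 'a set \<Rightarrow> nat \<Rightarrow> bool" where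
  "tf_ring_in s R n \<longleftrightarrow> qalgebra s \<and> unital_subring R \<and> qspan s R = UNIV \<and> has_rank s R n"

text \<open>Left regular elements R^\<times>.\<close>
definition left_regular :: "'a::ring_1 set \<Rightarrow> 'a set" where
  "left_regular R = {a \<in> R. \<forall>x\<in>R. \<forall>y\<in>R. a * x = a * y \<longrightarrow> x = y}"

definition submonoid :: "'a::ring_1 set \<Rightarrow> bool" where
  "submonoid M \<longleftrightarrow> 1 \<in> M \<and> (\<forall>x\<in>M. \<forall>y\<in>M. x * y \<in> M)"

definition zspan :: "'a::ring_1 set \<Rightarrow> 'a set" where
  "zspan M = {\<Sum>m\<in>F. of_int (c m) * m | F c. finite F \<and> F \<subseteq> M}"

definition finite_index :: "'a::ring_1 set \<Rightarrow> 'a set \<Rightarrow> bool" where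
  "finite_index S R \<longleftrightarrow> finite ((\<lambda>x. (\<lambda>y. x + y) ` S) ` R)"

inductive_set gen_group :: "'a::ring_1 set \<Rightarrow> 'a set" for M where
  one: "1 \<in> gen_group M"
| gen: "m \<in> M \<Longrightarrow> m \<in> gen_group M"
| inv: "m \<in> M \<Longrightarrow> m * b = 1 \<Longrightarrow> b * m = 1 \<Longrightarrow> b \<in> gen_group M"
| mult: "x \<in> gen_group M \<Longrightarrow> y \<in> gen_group M \<Longrightarrow> x * y \<in> gen_group M"

end

theory Submission
  imports Defs
begin

text \<open>The additive injection \<open>b\<close> is automatically \<open>\<rat>\<close>-linear, and as \<open>\<rat>\<L> = \<rat>R\<^sub>1\<close> and
\<open>\<rat>R\<^sub>2\<close> both have dimension \<open>n\<close>, it is a linear isomorphism \<open>\<rat>R\<^sub>1 \<rightarrow> \<rat>R\<^sub>2\<close>. Put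
\<open>u = b\<^sup>-\<^sup>1(1)\<close> and \<open>\<phi>(y) = b(y u)\<close>. The identity \<open>b(y x) = \<phi>(y) b(x)\<close> holds for \<open>y \<in> M\<^sub>1\<close>
and is \<open>\<rat>\<close>-linear in \<open>y\<close>, so it holds on the \<open>\<rat>\<close>-span of \<open>M\<^sub>1\<close>, which is all of \<open>\<rat>R\<^sub>1\<close>
because \<open>span\<^sub>\<int>(M\<^sub>1)\<close> has finite index in \<open>R\<^sub>1\<close>. Hence \<open>\<phi>\<close> is multiplicative, unital, and
injective since \<open>b(y) = \<phi>(y) b(1)\<close>; it is bijective by counting dimensions. Finally \<open>\<phi>\<close> agrees
with \<open>t\<close> on \<open>M\<^sub>1\<close> (take \<open>x = u\<close>), hence on the group \<open>\<langle>M\<^sub>1\<rangle>\<close>.\<close>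

lemma scale_of_int_eq_mult:
  fixes s :: "rat \<Rightarrow> 'a::ring_1 \<Rightarrow> 'a"
  assumes "module s"
  shows "s (of_int k) x = of_int k * x"
proof -
  interpret module s by fact
  show ?thesis
    by (induction k rule: int_induct[where k = 0])
      (simp_all add: scale_left_distrib scale_left_diff_distrib algebra_simps)
qed

lemma additive_scale_of_int:
  assumes "module s1" "module s2" and add: "\<And>x y. f (x + y) = f x + f y"
  shows "f (s1 (of_int k) x) = s2 (of_int k) (f x)"
proof -
  interpret m1: module s1 by fact
  interpret m2: module s2 by fact
  have zero: "f 0 = 0"
    using add[of 0 0] by simp
  have diff: "f (x - y) = f x - f y" for x y
    using add[of "x - y" y] by (simp add: algebra_simps)
  show ?thesis
    by (induction k rule: int_induct[where k = 0])
      (simp_all add: m1.scale_left_distrib m1.scale_left_diff_distrib m2.scale_left_distrib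
        m2.scale_left_diff_distrib add diff zero)
qed

lemma additive_imp_linear_rat:
  fixes s1 :: "rat \<Rightarrow> 'a::ab_group_add \<Rightarrow> 'a" and s2 :: "rat \<Rightarrow> 'b::ab_group_add \<Rightarrow> 'b"
  assumes "module s1" "module s2" and add: "\<And>x y. f (x + y) = f x + f y"
  shows "Vector_Spaces.linear s1 s2 f"
proof -
  interpret m1: module s1 by fact
  interpret m2: module s2 by fact
  have "f (s1 c x) = s2 c (f x)" for c x
  proof (cases c)
    case (Fract p q)
    then have c: "c = of_int p / of_int q" and q: "(of_int q :: rat) \<noteq> 0"
      by (simp_all add: Fract_of_int_quotient)
    have "s2 (of_int q) (f (s1 c x)) = s2 (of_int q) (s2 c (f x))"
      using additive_scale_of_int[OF assms, of q "s1 c x"] additive_scale_of_int[OF assms, of p x] q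
      by (simp add: c)
    then have "s2 (1 / of_int q) (s2 (of_int q) (f (s1 c x)))
        = s2 (1 / of_int q) (s2 (of_int q) (s2 c (f x)))" by simp
    then show ?thesis using q by simp
  qed
  with assms show ?thesis
    unfolding Vector_Spaces.linear_iff module_iff_vector_space by blast
qed

lemma has_rank_UNIV_finite_dimensional:
  assumes "vector_space s" "has_rank s UNIV n"
  obtains B where "finite_dimensional_vector_space s B" "vector_space.dim s UNIV = n"
proof -
  interpret vector_space s by fact
  obtain B where B: "finite B" "independent B" "span B = UNIV" "card B = n"
    using assms(2) unfolding has_rank_def by (auto simp: span_UNIV)
  then have "finite_dimensional_vector_space s B"
    by unfold_locales
  moreover have "dim UNIV = n"
    using B dim_span_eq_card_independent by metis
  ultimately show thesis
    by (rule that)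
qed

lemma tf_ring_in_has_rank_UNIV:
  assumes "tf_ring_in s R n"
  shows "has_rank s UNIV n"
proof -
  interpret vector_space s
    using assms by (simp add: tf_ring_in_def qalgebra_def)
  show ?thesis
    using assms unfolding tf_ring_in_def has_rank_def by (auto simp: span_UNIV)
qed

lemma qspan_eq_UNIV_if_full_rank:
  assumes "vector_space s" "has_rank s UNIV n" "has_rank s X n"
  shows "qspan s X = UNIV"
proof -
  obtain B where "finite_dimensional_vector_space s B" "vector_space.dim s UNIV = n"
    using assms(1,2) by (rule has_rank_UNIV_finite_dimensional)
  then interpret finite_dimensional_vector_space s B
    by simp
  obtain C where "finite C" "independent C" "span C = span X" "card C = n"
    using assms(3) unfolding has_rank_def by auto
  then show ?thesis
    using card_eq_dim[of C UNIV] \<open>dim UNIV = n\<close> by auto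
qed

lemma linear_inj_imp_surj_same_rank:
  assumes "Vector_Spaces.linear s1 s2 f" "inj f" "has_rank s1 UNIV n" "has_rank s2 UNIV n"
  shows "surj f"
proof -
  have vs: "vector_space s1" "vector_space s2"
    using assms(1) by (simp_all add: Vector_Spaces.linear_iff)
  obtain B1 where "finite_dimensional_vector_space s1 B1" "vector_space.dim s1 UNIV = n"
    using vs(1) assms(3) by (rule has_rank_UNIV_finite_dimensional)
  moreover obtain B2 where "finite_dimensional_vector_space s2 B2" "vector_space.dim s2 UNIV = n"
    using vs(2) assms(4) by (rule has_rank_UNIV_finite_dimensional)
  ultimately interpret finite_dimensional_vector_space_pair s1 B1 s2 B2
    by (simp add: finite_dimensional_vector_space_pair_def)
  show ?thesis
    using linear_injective_imp_surjective assms(1,2) \<open>vs1.dim UNIV = n\<close> \<open>vs2.dim UNIV = n\<close>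
    by simp
qed

lemma zspan_subset_qspan:
  fixes s :: "rat \<Rightarrow> 'a::ring_1 \<Rightarrow> 'a"
  assumes "module s"
  shows "zspan M \<subseteq> qspan s M"
proof
  interpret module s by fact
  fix z assume "z \<in> zspan M"
  then obtain F c where F: "F \<subseteq> M" and z: "z = (\<Sum>m\<in>F. of_int (c m) * m)"
    unfolding zspan_def by auto
  have "z = (\<Sum>m\<in>F. s (of_int (c m)) m)"
    using z scale_of_int_eq_mult[OF assms] by simp
  also have "\<dots> \<in> span M"
    using F by (intro span_sum span_scale span_base) auto
  finally show "z \<in> span M" .
qed

lemma finite_index_multiple_mem:
  assumes "unital_subring R" "finite_index S R" "0 \<in> S" "x \<in> R"
  obtains k :: int where "k \<noteq> 0" "of_int k * x \<in> S"
proof -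
  define coset where "coset i = (\<lambda>y. of_nat i * x + y) ` S" for i :: nat
  have "of_nat i \<in> R" for i
    using assms(1) by (induction i) (auto simp: unital_subring_def add_subgroup_def)
  then have "of_nat i * x \<in> R" for i
    using assms(1,4) unfolding unital_subring_def by blast
  then have "range coset \<subseteq> (\<lambda>x. (\<lambda>y. x + y) ` S) ` R"
    unfolding coset_def by (auto intro: imageI)
  then have "finite (range coset)"
    using assms(2) unfolding finite_index_def by (rule finite_subset)
  then have "\<not> inj coset"
    using finite_imageD infinite_UNIV_nat by blast
  then obtain i j where "i \<noteq> j" "coset i = coset j"
    unfolding inj_def by blast
  have "of_nat i * x \<in> coset i"
    unfolding coset_def by (rule image_eqI[of _ _ 0]) (simp_all add: assms(3))
  then have "of_nat i * x \<in> coset j"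
    using \<open>coset i = coset j\<close> by simp
  then obtain z where "z \<in> S" "of_nat i * x = of_nat j * x + z"
    unfolding coset_def by blast
  then have "of_int (int i - int j) * x \<in> S"
    by (simp add: algebra_simps)
  moreover have "int i - int j \<noteq> 0"
    using \<open>i \<noteq> j\<close> by simp
  ultimately show thesis
    using that by blast
qed

lemma qspan_eq_UNIV_if_finite_index:
  fixes s :: "rat \<Rightarrow> 'a::ring_1 \<Rightarrow> 'a"
  assumes "module s" "unital_subring R" "qspan s R = UNIV" "finite_index (zspan M) R"
  shows "qspan s M = UNIV"
proof -
  interpret module s by fact
  have "x \<in> span M" if "x \<in> R" for x
  proof -
    have "0 \<in> zspan M"
      unfolding zspan_def by (auto intro!: exI[of _ "{}"])
    then obtain k :: int where "k \<noteq> 0" "of_int k * x \<in> zspan M"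
      using finite_index_multiple_mem assms(2,4) \<open>x \<in> R\<close> by metis
    then have "s (of_int k) x \<in> span M"
      using zspan_subset_qspan[OF assms(1)] scale_of_int_eq_mult[OF assms(1)] by auto
    then have "s (1 / of_int k) (s (of_int k) x) \<in> span M"
      by (rule span_scale)
    then show ?thesis
      using \<open>k \<noteq> 0\<close> by simp
  qed
  then have "span R \<subseteq> span M"
    by (intro span_minimal subspace_span) auto
  then show ?thesis
    using assms(3) by auto
qed

lemma linear_mult_right:
  assumes "qalgebra s"
  shows "Vector_Spaces.linear s s (\<lambda>y. y * u)"
  using assms unfolding qalgebra_def Vector_Spaces.linear_iff by (simp add: distrib_right)

lemma mult_compat_on_span:
  assumes "qalgebra s1" "qalgebra s2"
    and "Vector_Spaces.linear s1 s2 b" "Vector_Spaces.linear s1 s2 T"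
    and compat: "\<forall>a\<in>M. \<forall>x. b (a * x) = T a * b x"
    and "y \<in> qspan s1 M"
  shows "b (y * x) = T y * b x"
proof -
  have b: "b (x + y) = b x + b y" "b (s1 c x) = s2 c (b x)" for x y c
    using assms(3) by (simp_all add: Vector_Spaces.linear_iff)
  have T: "T (x + y) = T x + T y" "T (s1 c x) = s2 c (T x)" for x y c
    using assms(4) by (simp_all add: Vector_Spaces.linear_iff)
  have mult: "s1 c (x * y) = s1 c x * y" "s2 c (x' * y') = s2 c x' * y'" for c x y x' y'
    using assms(1,2) unfolding qalgebra_def by auto
  interpret vector_space s1
    using assms(1) by (simp add: qalgebra_def)
  let ?P = "{y. \<forall>x. b (y * x) = T y * b x}"
  have "subspace ?P"
  proof (rule subspaceI)
    show "0 \<in> ?P"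
      using b(1)[of 0 0] T(1)[of 0 0] by simp
    show "y1 + y2 \<in> ?P" if "y1 \<in> ?P" "y2 \<in> ?P" for y1 y2
      using that by (simp add: distrib_right b T)
    show "s1 c y \<in> ?P" if "y \<in> ?P" for c y
      using that by (simp add: mult(1)[symmetric] b T mult(2)[symmetric])
  qed
  with compat have "span M \<subseteq> ?P"
    by (intro span_minimal) auto
  with assms(6) show ?thesis
    by auto
qed

lemma right_translate_algebra_hom:
  assumes "qalgebra s1" "qalgebra s2"
    and lin: "Vector_Spaces.linear s1 s2 b" and "inj b" and "b u = 1"
    and "qspan s1 M = UNIV" and compat: "\<forall>a\<in>M. \<forall>x. b (a * x) = t a * b x"
    and \<phi>_def: "\<And>y. \<phi> y = b (y * u)"
  shows "Vector_Spaces.linear s1 s2 \<phi>" "inj \<phi>" "\<And>x y. \<phi> (x * y) = \<phi> x * \<phi> y"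
    and "\<phi> 1 = 1" "\<And>a. a \<in> M \<Longrightarrow> \<phi> a = t a"
proof -
  have "\<phi> = b \<circ> (\<lambda>y. y * u)"
    using \<phi>_def by auto
  then show lin_\<phi>: "Vector_Spaces.linear s1 s2 \<phi>"
    using Vector_Spaces.linear_compose[OF linear_mult_right[OF assms(1)] lin] by simp
  show \<phi>_M: "\<phi> a = t a" if "a \<in> M" for a
    using compat that \<open>b u = 1\<close> by (simp add: \<phi>_def)
  have twisted: "b (y * x) = \<phi> y * b x" for y x
    by (rule mult_compat_on_span[OF assms(1,2) lin lin_\<phi>, of M])
      (use compat \<phi>_M \<open>qspan s1 M = UNIV\<close> in auto)
  show "\<phi> (x * y) = \<phi> x * \<phi> y" for x y
    using twisted[of x "y * u"] by (simp add: \<phi>_def mult.assoc)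
  show "\<phi> 1 = 1"
    using \<open>b u = 1\<close> by (simp add: \<phi>_def)
  show "inj \<phi>"
  proof (rule injI)
    fix x y assume "\<phi> x = \<phi> y"
    then have "b x = b y"
      using twisted[of x 1] twisted[of y 1] by simp
    with \<open>inj b\<close> show "x = y"
      by (simp add: inj_eq)
  qed
qed

lemma gen_group_hom_agree:
  fixes \<phi> t :: "'a::ring_1 \<Rightarrow> 'b::monoid_mult"
  assumes t_hom: "\<forall>x\<in>gen_group M. \<forall>y\<in>gen_group M. t (x * y) = t x * t y"
    and \<phi>_hom: "\<And>x y. \<phi> (x * y) = \<phi> x * \<phi> y"
    and "\<phi> 1 = 1" "t 1 = 1" and agree: "\<And>a. a \<in> M \<Longrightarrow> \<phi> a = t a"
    and "g \<in> gen_group M"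
  shows "\<phi> g = t g"
  using \<open>g \<in> gen_group M\<close>
proof (induction rule: gen_group.induct)
  case one
  then show ?case
    using \<open>\<phi> 1 = 1\<close> \<open>t 1 = 1\<close> by simp
next
  case (gen m)
  then show ?case
    by (rule agree)
next
  case (inv m c)
  have "m \<in> gen_group M" "c \<in> gen_group M"
    using inv by (auto intro: gen_group.gen gen_group.inv)
  then have "t m * t c = 1"
    using t_hom inv(2) \<open>t 1 = 1\<close> by metis
  then have "\<phi> c = \<phi> c * (\<phi> m * t c)"
    using agree[OF inv(1)] by simp
  also have "\<dots> = t c"
    using \<phi>_hom[of c m] inv(3) \<open>\<phi> 1 = 1\<close> by (simp add: mult.assoc[symmetric])
  finally show ?case .
next
  case (mult x y)
  then show ?case
    using \<phi>_hom t_hom by simp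
qed

theorem proposition5p1:
  fixes s1 :: "rat \<Rightarrow> 'a::ring_1 \<Rightarrow> 'a" and s2 :: "rat \<Rightarrow> 'b::ring_1 \<Rightarrow> 'b"
    and R1 :: "'a set" and R2 :: "'b set" and n :: nat
    and M1 :: "'a set" and M2 :: "'b set" and L :: "'a set"
    and b :: "'a \<Rightarrow> 'b" and t :: "'a \<Rightarrow> 'b"
  assumes R1: "tf_ring_in s1 R1 n" and R2: "tf_ring_in s2 R2 n"
    and M1: "submonoid M1" "M1 \<subseteq> left_regular R1"
    and M2: "submonoid M2" "M2 \<subseteq> left_regular R2"
    and L: "add_subgroup L" "L \<subseteq> R1" "has_rank s1 L n"
    and idx: "finite_index (zspan M1) R1"
    and b_add: "\<forall>x\<in>qspan s1 L. \<forall>y\<in>qspan s1 L. b (x + y) = b x + b y"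
    and b_inj: "inj_on b (qspan s1 L)"
    and t_maps: "t ` gen_group M1 \<subseteq> gen_group M2"
    and t_hom: "\<forall>x\<in>gen_group M1. \<forall>y\<in>gen_group M1. t (x * y) = t x * t y"
    and bt: "\<forall>a\<in>M1. \<forall>x\<in>qspan s1 L. b (a * x) = t a * b x"
  shows "\<exists>\<phi> :: 'a \<Rightarrow> 'b. bij \<phi> \<and>
           (\<forall>x y. \<phi> (x + y) = \<phi> x + \<phi> y) \<and>
           (\<forall>c x. \<phi> (s1 c x) = s2 c (\<phi> x)) \<and>
           (\<forall>x y. \<phi> (x * y) = \<phi> x * \<phi> y) \<and>
           \<phi> 1 = 1 \<and>
           (\<forall>g\<in>gen_group M1. \<phi> g = t g)"
proof -
  \<comment> \<open>Only the \<open>\<rat>\<close>-span of \<open>L\<close> matters.\<close>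
  have q1: "qalgebra s1" "unital_subring R1" "qspan s1 R1 = UNIV" and q2: "qalgebra s2"
    using R1 R2 by (simp_all add: tf_ring_in_def)
  then have m1: "module s1" and m2: "module s2"
    by (simp_all add: qalgebra_def module_iff_vector_space)
  have rank1: "has_rank s1 UNIV n" and rank2: "has_rank s2 UNIV n"
    using R1 R2 by (simp_all add: tf_ring_in_has_rank_UNIV)
  have span_L: "qspan s1 L = UNIV"
    using m1 rank1 L(3) by (simp add: qspan_eq_UNIV_if_full_rank module_iff_vector_space)
  have lin_b: "Vector_Spaces.linear s1 s2 b" and inj_b: "inj b"
    using additive_imp_linear_rat[OF m1 m2] b_add b_inj span_L by simp_all
  then obtain u where "b u = 1"
    using linear_inj_imp_surj_same_rank[OF lin_b inj_b rank1 rank2] by (metis surjD)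
  have span_M1: "qspan s1 M1 = UNIV"
    using qspan_eq_UNIV_if_finite_index[OF m1 q1(2,3) idx] .
  have compat: "\<forall>a\<in>M1. \<forall>x. b (a * x) = t a * b x"
    using bt span_L by simp
  define \<phi> where "\<phi> y = b (y * u)" for y
  have lin_\<phi>: "Vector_Spaces.linear s1 s2 \<phi>" and inj_\<phi>: "inj \<phi>"
    and mult_\<phi>: "\<And>x y. \<phi> (x * y) = \<phi> x * \<phi> y" and "\<phi> 1 = 1" and \<phi>_M1: "\<And>a. a \<in> M1 \<Longrightarrow> \<phi> a = t a"
    using right_translate_algebra_hom[OF q1(1) q2 lin_b inj_b \<open>b u = 1\<close> span_M1 compat \<phi>_def]
    by simp_all
  moreover have "surj \<phi>"
    using linear_inj_imp_surj_same_rank[OF lin_\<phi> inj_\<phi> rank1 rank2] .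
  moreover have "t 1 = 1"
    using \<phi>_M1 \<open>\<phi> 1 = 1\<close> M1(1) by (simp add: submonoid_def)
  ultimately show ?thesis
    using gen_group_hom_agree[OF t_hom mult_\<phi>] lin_\<phi>
    by (intro exI[of _ \<phi>]) (simp add: bij_def Vector_Spaces.linear_iff)
qed

end
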